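(* Let $R\ge1$ and $\mathbf{x}$ a vector of pairwise distinct reals. Then $$\max_{1\le m\le R}\sum_{n=1}^R a_{m,n}^2\le\Vert A(\mathbf{x})\Vert^2\le 3\max_{1\le m\le R}\sum_{n=1}^R a_{m,n}^2.$$
   Context: $A(\mathbf{x})$ is the $R\times R$ matrix with entries $a_{m,m}=0$ and $a_{m,n}=\frac{1}{x_m-x_n}$ for $m\ne n$; $\Vert\cdot\Vert$ is the operator norm induced by the Euclidean norm. *)

theory Defs
  imports "HOL-Analysis.Analysis"
begin

text \<open>The R x R matrix A(x) with zero diagonal and entries 1/(x_m - x_n) off the diagonal;
  the dimension R is the cardinality of the finite index type 'n.\<close>
definition cauchyA :: "real^'n \<Rightarrow> real^'n^'n" where
  "cauchyA x = (\<chi> m n. if m = n then 0 else 1 / (x $ m - x $ n))"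

definition opnorm :: "real^'n^'m \<Rightarrow> real" where
  "opnorm M = onorm (\<lambda>v. M *v v)"

end

theory Submission
  imports Defs
begin

text \<open>The matrix A is skew-symmetric and its entries satisfy the partial fraction identity
  \<open>a\<^sub>m\<^sub>n a\<^sub>m\<^sub>k = a\<^sub>n\<^sub>k (a\<^sub>m\<^sub>n - a\<^sub>m\<^sub>k)\<close> for distinct m, n, k. Expanding \<open>\<parallel>Au\<parallel>\<^sup>2\<close> with this
  identity gives a quadratic form bounded by \<open>3 max\<^sub>m \<Sum>\<^sub>n a\<^sub>m\<^sub>n\<^sup>2 \<parallel>u\<parallel>\<^sup>2\<close>, plus a cross term
  \<open>-2 \<Sum>\<^sub>n s\<^sub>n u\<^sub>n (Au)\<^sub>n\<close> with the row sums \<open>s\<^sub>n\<close>. For a unit vector v at which \<open>\<parallel>Av\<parallel>\<close>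
  attains \<open>\<parallel>A\<parallel> = \<sigma> > 0\<close>, skew-symmetry gives \<open>A\<^sup>2 v = -\<sigma>\<^sup>2 v\<close>, so q = -Av/\<sigma> is a unit
  vector with Av = -\<sigma>q and Aq = \<sigma>v: the cross terms for v and q cancel, and adding the
  two expansions yields \<open>2\<sigma>\<^sup>2 \<le> 6 max\<^sub>m \<Sum>\<^sub>n a\<^sub>m\<^sub>n\<^sup>2\<close>. The lower bound holds because, by
  skew-symmetry, each row of A has the norm of a column, the image of a unit vector.\<close>

lemma power2_norm_vec: "(norm (v :: real^'n))^2 = (\<Sum>i\<in>UNIV. (v $ i)^2)"
  unfolding power2_norm_eq_inner inner_vec_def by (simp add: power2_eq_square)

lemma column_sq_le_opnorm:
  fixes A :: "real^'n^'m"
  shows "(\<Sum>i\<in>UNIV. (A $ i $ j)^2) \<le> (opnorm A)^2"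
proof -
  have "(\<Sum>i\<in>UNIV. (A $ i $ j)^2) = (norm (column j A))^2"
    by (simp add: power2_norm_vec column_def)
  also have "\<dots> \<le> (opnorm A)^2"
    using norm_column_le_onorm[of j A] by (simp add: opnorm_def power_mono)
  finally show ?thesis .
qed

lemma opnorm_attained:
  fixes A :: "real^'n^'m"
  obtains v where "norm v = 1" and "norm (A *v v) = opnorm A"
proof -
  have "sphere (0 :: real^'n) 1 \<noteq> {}"
    using norm_axis_1 by (metis mem_sphere_0 empty_iff)
  moreover have "continuous_on (sphere 0 1) (\<lambda>y. norm (A *v y))"
    by (intro continuous_on_norm linear_continuous_on matrix_vector_mul_bounded_linear)
  ultimately obtain v where v: "norm v = 1" and max: "\<And>y. norm y = 1 \<Longrightarrow> norm (A *v y) \<le> norm (A *v v)"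
    using continuous_attains_sup[OF compact_sphere] by (metis mem_sphere_0)
  have "norm (A *v y) \<le> norm (A *v v) * norm y" for y
  proof (cases "y = 0")
    case False
    then have "norm (A *v ((1 / norm y) *\<^sub>R y)) \<le> norm (A *v v)" by (intro max) simp
    with False show ?thesis by (simp add: matrix_vector_mult_scaleR field_simps)
  qed simp
  then have "opnorm A \<le> norm (A *v v)"
    unfolding opnorm_def by (rule onorm_le)
  moreover have "norm (A *v v) \<le> opnorm A"
    using onorm[OF matrix_vector_mul_bounded_linear, of A v] v by (simp add: opnorm_def)
  ultimately show ?thesis using that v by simp
qed

text \<open>Equality in Cauchy-Schwarz for \<open>v \<bullet> -A(Av) = \<parallel>Av\<parallel>\<^sup>2 = \<parallel>A\<parallel>\<^sup>2\<close>, where \<open>\<parallel>A(Av)\<parallel> \<le> \<parallel>A\<parallel>\<^sup>2\<close>.\<close>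

lemma skew_maximizer_eigenvector:
  fixes A :: "real^'n^'n"
  assumes skew: "\<And>u w. (A *v u) \<bullet> w = - (u \<bullet> (A *v w))"
    and v: "norm v = 1" and max: "norm (A *v v) = opnorm A"
  shows "A *v (A *v v) = - ((opnorm A)^2 *\<^sub>R v)"
proof -
  define z where "z = - (A *v (A *v v))"
  have "v \<bullet> z = (A *v v) \<bullet> (A *v v)"
    using skew[of v "A *v v"] by (simp add: z_def)
  also have "\<dots> = (opnorm A)^2"
    using max by (metis power2_norm_eq_inner)
  finally have vz: "v \<bullet> z = (opnorm A)^2" .
  have "norm z \<le> opnorm A * norm (A *v v)"
    using onorm[OF matrix_vector_mul_bounded_linear, of A "A *v v"] by (simp add: z_def opnorm_def)
  then have "norm z \<le> (opnorm A)^2"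
    using max by (simp add: power2_eq_square)
  moreover have "v \<bullet> z \<le> norm z"
    using norm_cauchy_schwarz[of v z] v by simp
  ultimately have cs_eq: "v \<bullet> z = norm v * norm z"
    using vz v by simp
  then have "z = norm z *\<^sub>R v"
    using norm_cauchy_schwarz_eq[of v z] v by simp
  moreover have "norm z = (opnorm A)^2"
    using cs_eq vz v by simp
  ultimately have "z = (opnorm A)^2 *\<^sub>R v"
    by simp
  then show ?thesis
    unfolding z_def by (metis minus_minus)
qed

locale cauchy_kernel =
  fixes A :: "real^'n^'n"
  assumes antisym: "A $ n $ m = - A $ m $ n"
    and partial_fractions: "m \<noteq> n \<Longrightarrow> m \<noteq> k \<Longrightarrow> n \<noteq> k \<Longrightarrow>
      A $ m $ n * A $ m $ k = A $ n $ k * (A $ m $ n - A $ m $ k)"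
begin

definition row_sq :: "'n \<Rightarrow> real" where
  "row_sq m = (\<Sum>n\<in>UNIV. (A $ m $ n)^2)"

definition row_sum :: "'n \<Rightarrow> real" where
  "row_sum m = (\<Sum>n\<in>UNIV. A $ m $ n)"

definition sq_form :: "real^'n \<Rightarrow> real" where
  "sq_form u = (\<Sum>n\<in>UNIV. row_sq n * (u $ n)^2) + 2 * (\<Sum>n\<in>UNIV. \<Sum>k\<in>UNIV. (A $ n $ k)^2 * u $ n * u $ k)"

lemma diag_zero [simp]: "A $ m $ m = 0"
  using antisym[of m m] by simp

lemma column_sq_eq_row_sq: "(\<Sum>i\<in>UNIV. (A $ i $ m)^2) = row_sq m"
  unfolding row_sq_def by (intro sum.cong refl) (simp add: antisym[of _ m])

lemma skew_adjoint: "(A *v u) \<bullet> w = - (u \<bullet> (A *v w))"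
proof -
  have "(A *v u) \<bullet> w = (\<Sum>i\<in>UNIV. \<Sum>j\<in>UNIV. A $ i $ j * u $ j * w $ i)"
    by (simp add: inner_vec_def matrix_vector_mult_def sum_distrib_right)
  also have "\<dots> = (\<Sum>j\<in>UNIV. \<Sum>i\<in>UNIV. A $ i $ j * u $ j * w $ i)"
    by (rule sum.swap)
  also have "\<dots> = (\<Sum>j\<in>UNIV. \<Sum>i\<in>UNIV. - (u $ j * (A $ j $ i * w $ i)))"
  proof (intro sum.cong refl)
    fix i j
    show "A $ i $ j * u $ j * w $ i = - (u $ j * (A $ j $ i * w $ i))"
      using antisym[of j i] by simp
  qed
  also have "\<dots> = - (u \<bullet> (A *v w))"
    by (simp add: inner_vec_def matrix_vector_mult_def sum_distrib_left sum_negf)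
  finally show ?thesis .
qed

lemma sum_column_products:
  "(\<Sum>m\<in>UNIV. A $ m $ n * A $ m $ k) =
     (if n = k then row_sq n else 0) + A $ n $ k * (row_sum k - row_sum n) + 2 * (A $ n $ k)^2"
proof (cases "n = k")
  case True
  then show ?thesis
    using column_sq_eq_row_sq[of n] by (simp add: power2_eq_square)
next
  case False
  have "A $ m $ n * A $ m $ k =
      A $ n $ k * (A $ k $ m - A $ n $ m) + (if m = n then (A $ n $ k)^2 else 0) + (if m = k then (A $ n $ k)^2 else 0)"
    for m
    using False partial_fractions[of m n k] antisym[of n m] antisym[of k m] antisym[of k n]
    by (auto simp: power2_eq_square algebra_simps)
  then have "(\<Sum>m\<in>UNIV. A $ m $ n * A $ m $ k) =
      (\<Sum>m\<in>UNIV. A $ n $ k * (A $ k $ m - A $ n $ m)) + 2 * (A $ n $ k)^2"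
    by (simp add: sum.distrib)
  with False show ?thesis
    by (simp add: row_sum_def sum_subtractf flip: sum_distrib_left)
qed

lemma sum_cross_term:
  "(\<Sum>n\<in>UNIV. \<Sum>k\<in>UNIV. u $ n * u $ k * (A $ n $ k * (row_sum k - row_sum n)))
     = - 2 * (\<Sum>n\<in>UNIV. row_sum n * u $ n * (A *v u) $ n)"
proof -
  have "(\<Sum>n\<in>UNIV. \<Sum>k\<in>UNIV. u $ n * u $ k * A $ n $ k * row_sum k)
      = (\<Sum>k\<in>UNIV. \<Sum>n\<in>UNIV. u $ n * u $ k * A $ n $ k * row_sum k)"
    by (rule sum.swap)
  also have "\<dots> = - (\<Sum>k\<in>UNIV. \<Sum>n\<in>UNIV. u $ k * u $ n * A $ k $ n * row_sum k)"
  proof (simp only: flip: sum_negf, intro sum.cong refl)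
    fix k n
    show "u $ n * u $ k * A $ n $ k * row_sum k = - (u $ k * u $ n * A $ k $ n * row_sum k)"
      using antisym[of k n] by simp
  qed
  finally have swap: "(\<Sum>n\<in>UNIV. \<Sum>k\<in>UNIV. u $ n * u $ k * A $ n $ k * row_sum k)
      = - (\<Sum>n\<in>UNIV. \<Sum>k\<in>UNIV. u $ n * u $ k * A $ n $ k * row_sum n)" .
  have "(\<Sum>n\<in>UNIV. \<Sum>k\<in>UNIV. u $ n * u $ k * (A $ n $ k * (row_sum k - row_sum n)))
      = (\<Sum>n\<in>UNIV. \<Sum>k\<in>UNIV. u $ n * u $ k * A $ n $ k * row_sum k)
        - (\<Sum>n\<in>UNIV. \<Sum>k\<in>UNIV. u $ n * u $ k * A $ n $ k * row_sum n)"
    by (simp add: algebra_simps flip: sum_subtractf)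
  also have "\<dots> = - 2 * (\<Sum>n\<in>UNIV. row_sum n * u $ n * (A *v u) $ n)"
    unfolding swap by (simp add: matrix_vector_mult_def sum_distrib_left mult_ac)
  finally show ?thesis .
qed

lemma power2_norm_mult_vec:
  "(norm (A *v u))^2 = sq_form u - 2 * (\<Sum>n\<in>UNIV. row_sum n * u $ n * (A *v u) $ n)"
proof -
  have "(norm (A *v u))^2 = (\<Sum>m\<in>UNIV. \<Sum>n\<in>UNIV. \<Sum>k\<in>UNIV. (A $ m $ n * u $ n) * (A $ m $ k * u $ k))"
    unfolding power2_norm_vec by (simp add: matrix_vector_mult_def power2_eq_square sum_product)
  also have "\<dots> = (\<Sum>n\<in>UNIV. \<Sum>k\<in>UNIV. \<Sum>m\<in>UNIV. (A $ m $ n * u $ n) * (A $ m $ k * u $ k))"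
    by (subst sum.swap) (rule sum.cong[OF refl], rule sum.swap)
  also have "\<dots> = (\<Sum>n\<in>UNIV. \<Sum>k\<in>UNIV. u $ n * u $ k * (\<Sum>m\<in>UNIV. A $ m $ n * A $ m $ k))"
    by (simp add: sum_distrib_left mult_ac)
  also have "\<dots> = (\<Sum>n\<in>UNIV. \<Sum>k\<in>UNIV. u $ n * u $ k * (if n = k then row_sq n else 0))
      + (\<Sum>n\<in>UNIV. \<Sum>k\<in>UNIV. u $ n * u $ k * (A $ n $ k * (row_sum k - row_sum n)))
      + 2 * (\<Sum>n\<in>UNIV. \<Sum>k\<in>UNIV. (A $ n $ k)^2 * u $ n * u $ k)"
    by (simp add: sum_column_products distrib_left sum.distrib sum_distrib_left mult_ac)
  finally show ?thesis
    unfolding sum_cross_term by (simp add: sq_form_def power2_eq_square if_distrib mult_ac cong: if_cong)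
qed

lemma sq_form_le: "sq_form u \<le> 3 * (MAX m\<in>UNIV. row_sq m) * (norm u)^2"
proof -
  define M where "M = (MAX m\<in>UNIV. row_sq m)"
  have row_le: "row_sq m \<le> M" for m
    unfolding M_def by (rule Max_ge) auto
  have diag: "(\<Sum>n\<in>UNIV. row_sq n * (u $ n)^2) \<le> M * (norm u)^2"
    unfolding power2_norm_vec sum_distrib_left by (intro sum_mono mult_right_mono row_le) auto
  have "2 * (\<Sum>n\<in>UNIV. \<Sum>k\<in>UNIV. (A $ n $ k)^2 * u $ n * u $ k)
      \<le> (\<Sum>n\<in>UNIV. \<Sum>k\<in>UNIV. (A $ n $ k)^2 * (u $ n)^2 + (A $ n $ k)^2 * (u $ k)^2)"
    unfolding sum_distrib_left
  proof (intro sum_mono)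
    fix n k
    have "(A $ n $ k)^2 * (2 * (u $ n * u $ k)) \<le> (A $ n $ k)^2 * ((u $ n)^2 + (u $ k)^2)"
      using sum_squares_bound[of "u $ n" "u $ k"] by (intro mult_left_mono) auto
    then show "2 * ((A $ n $ k)^2 * u $ n * u $ k) \<le> (A $ n $ k)^2 * (u $ n)^2 + (A $ n $ k)^2 * (u $ k)^2"
      by (simp add: algebra_simps)
  qed
  also have "\<dots> = (\<Sum>n\<in>UNIV. (\<Sum>k\<in>UNIV. (A $ n $ k)^2) * (u $ n)^2)
      + (\<Sum>k\<in>UNIV. (\<Sum>n\<in>UNIV. (A $ n $ k)^2) * (u $ k)^2)"
    by (simp add: sum.distrib sum_distrib_right) (rule sum.swap)
  also have "\<dots> = (\<Sum>n\<in>UNIV. row_sq n * (u $ n)^2) + (\<Sum>k\<in>UNIV. row_sq k * (u $ k)^2)"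
    by (simp only: column_sq_eq_row_sq flip: row_sq_def)
  finally show ?thesis
    using diag unfolding sq_form_def M_def by linarith
qed

lemma row_sq_le_opnorm: "row_sq m \<le> (opnorm A)^2"
  using column_sq_le_opnorm[of A m] unfolding column_sq_eq_row_sq .

lemma opnorm_sq_le: "(opnorm A)^2 \<le> 3 * (MAX m\<in>UNIV. row_sq m)"
proof -
  define \<sigma> where "\<sigma> = opnorm A"
  define M where "M = (MAX m\<in>UNIV. row_sq m)"
  obtain v where v: "norm v = 1" and max: "norm (A *v v) = \<sigma>"
    using opnorm_attained unfolding \<sigma>_def by blast
  have \<sigma>_nonneg: "0 \<le> \<sigma>"
    using max by (metis norm_ge_zero)
  show ?thesis
  proof (cases "\<sigma> = 0")
    case True
    have "0 \<le> row_sq m" for m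
      unfolding row_sq_def by (intro sum_nonneg) auto
    moreover have "row_sq m \<le> M" for m
      unfolding M_def by (rule Max_ge) auto
    ultimately have "0 \<le> M"
      by (meson order_trans)
    with True show ?thesis by (simp add: \<sigma>_def M_def)
  next
    case False
    define q where "q = (- 1 / \<sigma>) *\<^sub>R (A *v v)"
    have Av: "A *v v = - \<sigma> *\<^sub>R q"
      using False by (simp add: q_def)
    have "A *v q = (- 1 / \<sigma>) *\<^sub>R (A *v (A *v v))"
      unfolding q_def by (rule matrix_vector_mult_scaleR)
    also have "\<dots> = \<sigma> *\<^sub>R v"
      using skew_maximizer_eigenvector[OF skew_adjoint v] max False
      by (simp add: \<sigma>_def power2_eq_square)
    finally have Aq: "A *v q = \<sigma> *\<^sub>R v" .
    have q: "norm q = 1"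
      using max False \<sigma>_nonneg by (simp add: q_def)
    define C where "C = (\<Sum>n\<in>UNIV. row_sum n * v $ n * q $ n)"
    have "(\<Sum>n\<in>UNIV. row_sum n * v $ n * (A *v v) $ n) = - \<sigma> * C"
      unfolding Av C_def sum_distrib_left by (intro sum.cong refl) simp
    then have expand_v: "\<sigma>^2 = sq_form v + 2 * \<sigma> * C"
      using power2_norm_mult_vec[of v] max by simp
    have "(\<Sum>n\<in>UNIV. row_sum n * q $ n * (A *v q) $ n) = \<sigma> * C"
      unfolding Aq C_def sum_distrib_left by (intro sum.cong refl) simp
    then have expand_q: "\<sigma>^2 = sq_form q - 2 * \<sigma> * C"
      using power2_norm_mult_vec[of q] v \<sigma>_nonneg by (simp add: Aq)
    have "sq_form v \<le> 3 * M" "sq_form q \<le> 3 * M"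
      using sq_form_le[of v] sq_form_le[of q] v q by (simp_all add: M_def)
    with expand_v expand_q have "2 * \<sigma>^2 \<le> 6 * M"
      by linarith
    then show ?thesis
      by (simp add: \<sigma>_def M_def)
  qed
qed

end

lemma cauchy_kernel_cauchyA:
  assumes "inj (\<lambda>i. x $ i)"
  shows "cauchy_kernel (cauchyA x)"
proof
  have ne: "x $ m - x $ n \<noteq> 0" if "m \<noteq> n" for m n
    using assms that by (auto dest: injD)
  show "cauchyA x $ n $ m = - cauchyA x $ m $ n" for m n
    using ne[of m n] ne[of n m] by (simp add: cauchyA_def field_simps)
  show "cauchyA x $ m $ n * cauchyA x $ m $ k
      = cauchyA x $ n $ k * (cauchyA x $ m $ n - cauchyA x $ m $ k)"
    if "m \<noteq> n" "m \<noteq> k" "n \<noteq> k" for m n k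
    using that ne[of m n] ne[of m k] ne[of n k] by (simp add: cauchyA_def field_simps)
qed

theorem corollary2:
  fixes x :: "real^'n"
  assumes "inj (\<lambda>i. x $ i)"
  shows "(MAX m\<in>UNIV. \<Sum>n\<in>UNIV. (cauchyA x $ m $ n)^2) \<le> (opnorm (cauchyA x))^2
       \<and> (opnorm (cauchyA x))^2 \<le> 3 * (MAX m\<in>UNIV. \<Sum>n\<in>UNIV. (cauchyA x $ m $ n)^2)"
proof -
  interpret cauchy_kernel "cauchyA x"
    using assms by (rule cauchy_kernel_cauchyA)
  have "(MAX m\<in>UNIV. row_sq m) \<le> (opnorm (cauchyA x))^2"
    using row_sq_le_opnorm by (auto intro: Max.boundedI)
  with opnorm_sq_le show ?thesis
    by (simp add: row_sq_def)
qed

end
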